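(* Let $c>0$ and $m>0$ be constants and let $f:\mathbb{Z}\to\mathbb{Z}$ be a non-decreasing map such that $f(j)-f(i)\le j-i$ for all integers $i<j$, and $f(j)-f(i)\ge c\,(j-i)$ for all integers $i,j$ with $i+m\le j$. Let $B$ be an integer-valued random variable with $0<\mathrm{Var}(B)<\infty$. Then $$\mathrm{Var}(f(B))\ \ge\ c^2\left(1-\frac{2m}{c\sqrt{\mathrm{Var}(B)}}\right)\mathrm{Var}(B).$$ *)

theory Defs
  imports "HOL-Probability.Probability"
begin

end

theory Submission
  imports Defs
begin

text \<open>
  Put \<open>\<mu> = E B\<close>, \<open>V = Var B\<close> and \<open>D = B - \<mu>\<close>. Because \<open>f\<close> grows at slope at least \<open>c\<close> up to
  an error \<open>c m\<close>, there is a constant \<open>a\<close> with \<open>(f B - a) D \<ge> c D\<^sup>2 - c m \<bar>D\<bar>\<close> pointwise.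
  Expanding \<open>0 \<le> (f B - E f B - c D)\<^sup>2\<close> and taking expectations, \<open>E D = 0\<close> turns this
  correlation bound into \<open>Var f B \<ge> c\<^sup>2 V - 2 c\<^sup>2 m E\<bar>D\<bar>\<close>, and \<open>E\<bar>D\<bar> \<le> \<surd>V\<close>. Finally \<open>c \<le> 1\<close>,
  since \<open>f\<close> also has slope at most \<open>1\<close>.
\<close>

lemma mono_slope_le_1_imp_abs_diff_le:
  fixes f :: "int \<Rightarrow> int"
  assumes "mono f" and slope: "\<And>i j. i < j \<Longrightarrow> f j - f i \<le> j - i"
  shows "\<bar>f x - f y\<bar> \<le> \<bar>x - y\<bar>"
proof (cases x y rule: linorder_cases)
  case less
  then show ?thesis using slope[OF less] monoD[OF \<open>mono f\<close>, of x y] by simp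
next
  case greater
  then show ?thesis using slope[OF greater] monoD[OF \<open>mono f\<close>, of y x] by simp
qed simp

lemma coarse_slope_le_1:
  fixes f :: "int \<Rightarrow> int" and c m :: real
  assumes slope: "\<And>i j. i < j \<Longrightarrow> f j - f i \<le> j - i"
    and growth: "\<And>i j. real_of_int i + m \<le> real_of_int j \<Longrightarrow> real_of_int (f j - f i) \<ge> c * real_of_int (j - i)"
  shows "c \<le> 1"
proof -
  define j where "j = max 1 \<lceil>m\<rceil>"
  have j: "real_of_int 0 + m \<le> real_of_int j" "j > 0" unfolding j_def by linarith+
  have "c * j \<le> real_of_int (f j - f 0)" using growth[OF j(1)] by simp
  also have "\<dots> \<le> j" using slope[OF j(2)] by simp
  finally show ?thesis using j(2) by simp
qed

lemma coarse_growth_lower_bound: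
  fixes f :: "int \<Rightarrow> int" and c m :: real
  assumes "c \<ge> 0" and "m \<ge> 0" and "mono f"
    and growth: "\<And>i j. real_of_int i + m \<le> real_of_int j \<Longrightarrow> real_of_int (f j - f i) \<ge> c * real_of_int (j - i)"
    and "z \<le> y"
  shows "real_of_int (f y) - real_of_int (f z) \<ge> c * (y - z) - c * m"
proof (cases "real_of_int z + m \<le> real_of_int y")
  case True
  have "c * m \<ge> 0" using \<open>c \<ge> 0\<close> \<open>m \<ge> 0\<close> by simp
  with growth[OF True] show ?thesis by (simp add: algebra_simps)
next
  case False
  have "real_of_int (f z) \<le> real_of_int (f y)" using \<open>mono f\<close> \<open>z \<le> y\<close> by (simp add: monoD)
  moreover have "c * real_of_int (y - z) \<le> c * m"
    using False \<open>c \<ge> 0\<close> by (intro mult_left_mono) auto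
  ultimately show ?thesis by linarith
qed

text \<open>The constant \<open>a\<close> of the idea is the value at \<open>\<mu>\<close> of the line of slope \<open>c\<close> through \<open>(\<lfloor>\<mu>\<rfloor>, f \<lfloor>\<mu>\<rfloor>)\<close>.\<close>

lemma coarse_growth_correlation_bound:
  fixes f :: "int \<Rightarrow> int" and c m \<mu> :: real
  assumes "c \<ge> 0" and "m \<ge> 0" and "mono f"
    and growth: "\<And>i j. real_of_int i + m \<le> real_of_int j \<Longrightarrow> real_of_int (f j - f i) \<ge> c * real_of_int (j - i)"
  shows "(real_of_int (f x) - (real_of_int (f \<lfloor>\<mu>\<rfloor>) + c * (\<mu> - \<lfloor>\<mu>\<rfloor>))) * (x - \<mu>)
         \<ge> c * (x - \<mu>)\<^sup>2 - c * m * \<bar>x - \<mu>\<bar>"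
proof -
  define k where "k = \<lfloor>\<mu>\<rfloor>"
  define a where "a = real_of_int (f k) + c * (\<mu> - k)"
  have growth_bound: "real_of_int (f y) - real_of_int (f z) \<ge> c * (y - z) - c * m" if "z \<le> y" for y z
    using coarse_growth_lower_bound[of c m f] assms that by blast
  consider "real_of_int x > \<mu>" | "real_of_int x < \<mu>" | "real_of_int x = \<mu>" by linarith
  then have "(real_of_int (f x) - a) * (x - \<mu>) \<ge> c * (x - \<mu>)\<^sup>2 - c * m * \<bar>x - \<mu>\<bar>"
  proof cases
    case 1
    then have "k \<le> x" unfolding k_def by linarith
    from growth_bound[OF this] have "real_of_int (f x) - a \<ge> c * (x - \<mu>) - c * m"
      unfolding a_def by (simp add: algebra_simps)
    then have "(real_of_int (f x) - a) * (x - \<mu>) \<ge> (c * (x - \<mu>) - c * m) * (x - \<mu>)"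
      using 1 by (intro mult_right_mono) auto
    then show ?thesis using 1 by (simp add: power2_eq_square algebra_simps)
  next
    case 2
    then have "x \<le> k" unfolding k_def by linarith
    from growth_bound[OF this] have "real_of_int (f x) - a \<le> c * (x - \<mu>) + c * m"
      unfolding a_def by (simp add: algebra_simps)
    then have "(real_of_int (f x) - a) * (x - \<mu>) \<ge> (c * (x - \<mu>) + c * m) * (x - \<mu>)"
      using 2 by (intro mult_right_mono_neg) auto
    then show ?thesis using 2 by (simp add: power2_eq_square algebra_simps)
  qed simp
  then show ?thesis unfolding a_def k_def .
qed

text \<open>With \<open>s = \<surd>V\<close>, the pointwise bound \<open>2 s \<bar>d\<bar> \<le> d\<^sup>2 + s\<^sup>2\<close> stands in for \<open>E\<bar>D\<bar> \<le> \<surd>V\<close>.\<close>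

lemma square_ge_of_correlation_bound:
  fixes y a e d c m s :: real
  assumes "c \<ge> 0" and "m \<ge> 0" and "s > 0"
    and corr: "(y - a) * d \<ge> c * d\<^sup>2 - c * m * \<bar>d\<bar>"
  shows "(y - e)\<^sup>2 \<ge> (c\<^sup>2 - c\<^sup>2 * m / s) * d\<^sup>2 - c\<^sup>2 * m * s + 2 * c * (a - e) * d"
proof -
  have completed_square: "(y - e)\<^sup>2 \<ge> 2 * c * ((y - e) * d) - c\<^sup>2 * d\<^sup>2"
    using zero_le_power2[of "y - e - c * d"] by (simp add: power2_eq_square algebra_simps)
  have "2 * c * ((y - e) * d) = 2 * c * ((y - a) * d) + 2 * c * (a - e) * d"
    by (simp add: algebra_simps)
  also have "\<dots> \<ge> 2 * c * (c * d\<^sup>2 - c * m * \<bar>d\<bar>) + 2 * c * (a - e) * d"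
    using mult_left_mono[OF corr, of "2 * c"] \<open>c \<ge> 0\<close> by simp
  finally have cross: "2 * c * ((y - e) * d) \<ge> 2 * c\<^sup>2 * d\<^sup>2 - 2 * c\<^sup>2 * m * \<bar>d\<bar> + 2 * c * (a - e) * d"
    by (simp add: power2_eq_square algebra_simps)
  have "2 * s * \<bar>d\<bar> \<le> d\<^sup>2 + s\<^sup>2"
    using zero_le_power2[of "\<bar>d\<bar> - s"] by (simp add: power2_eq_square algebra_simps)
  then have "\<bar>d\<bar> \<le> (d\<^sup>2 / s + s) / 2"
    using \<open>s > 0\<close> by (simp add: field_simps power2_eq_square)
  then have "2 * c\<^sup>2 * m * \<bar>d\<bar> \<le> 2 * c\<^sup>2 * m * ((d\<^sup>2 / s + s) / 2)"
    using \<open>m \<ge> 0\<close> by (intro mult_left_mono) auto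
  also have "\<dots> = c\<^sup>2 * m / s * d\<^sup>2 + c\<^sup>2 * m * s"
    using \<open>s > 0\<close> by (simp add: field_simps)
  finally show ?thesis using completed_square cross by (simp add: algebra_simps)
qed

lemma (in prob_space) variance_ge_of_correlation_bound:
  fixes X Y :: "'a \<Rightarrow> real" and a c m :: real
  assumes X: "X \<in> borel_measurable M" "integrable M (\<lambda>x. (X x)\<^sup>2)"
    and Y: "Y \<in> borel_measurable M" "integrable M (\<lambda>x. (Y x)\<^sup>2)"
    and "c \<ge> 0" and "m \<ge> 0" and "variance X > 0"
    and corr: "\<And>x. x \<in> space M \<Longrightarrow>
      (Y x - a) * (X x - expectation X) \<ge> c * (X x - expectation X)\<^sup>2 - c * m * \<bar>X x - expectation X\<bar>"
  shows "variance Y \<ge> c\<^sup>2 * variance X - 2 * c\<^sup>2 * m * sqrt (variance X)"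
proof -
  define V where "V = variance X"
  define s where "s = sqrt V"
  define D where "D = (\<lambda>x. X x - expectation X)"
  define e where "e = expectation Y"
  have "s > 0" and "s * s = V" using \<open>variance X > 0\<close> unfolding s_def V_def by auto
  have iX: "integrable M X" by (rule square_integrable_imp_integrable[OF X])
  have iY: "integrable M Y" by (rule square_integrable_imp_integrable[OF Y])
  have iD: "integrable M D" and iD2: "integrable M (\<lambda>x. (D x)\<^sup>2)"
    unfolding D_def power2_diff using X(2) iX by simp_all
  have ED: "expectation D = 0" unfolding D_def using iX by (simp add: prob_space)
  have ED2: "expectation (\<lambda>x. (D x)\<^sup>2) = V" unfolding D_def V_def ..
  let ?lower = "\<lambda>x. (c\<^sup>2 - c\<^sup>2 * m / s) * (D x)\<^sup>2 - c\<^sup>2 * m * s + 2 * c * (a - e) * D x"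
  have "c\<^sup>2 * V - 2 * c\<^sup>2 * m * s = (c\<^sup>2 - c\<^sup>2 * m / s) * V - c\<^sup>2 * m * s"
    using \<open>s > 0\<close> \<open>s * s = V\<close> by (simp add: field_simps)
  also have "\<dots> = expectation ?lower"
    using iD2 iD ED ED2 by (simp add: prob_space)
  also have "\<dots> \<le> expectation (\<lambda>x. (Y x - e)\<^sup>2)"
  proof (rule integral_mono)
    show "integrable M ?lower" using iD2 iD by simp
    show "integrable M (\<lambda>x. (Y x - e)\<^sup>2)" unfolding power2_diff using Y(2) iY by simp
    show "?lower x \<le> (Y x - e)\<^sup>2" if "x \<in> space M" for x
      using square_ge_of_correlation_bound[OF \<open>c \<ge> 0\<close> \<open>m \<ge> 0\<close> \<open>s > 0\<close> corr[OF that]]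
      unfolding D_def .
  qed
  finally show ?thesis unfolding e_def s_def V_def .
qed

lemma (in finite_measure) square_integrable_of_abs_diff_le:
  fixes X Y :: "'a \<Rightarrow> real" and b :: real
  assumes "Y \<in> borel_measurable M" and "integrable M (\<lambda>x. (X x)\<^sup>2)"
    and dominated: "\<And>x. x \<in> space M \<Longrightarrow> \<bar>Y x - b\<bar> \<le> \<bar>X x\<bar>"
  shows "integrable M (\<lambda>x. (Y x)\<^sup>2)"
proof (rule Bochner_Integration.integrable_bound)
  show "integrable M (\<lambda>x. 2 * b\<^sup>2 + 2 * (X x)\<^sup>2)" using assms(2) by simp
  show "(\<lambda>x. (Y x)\<^sup>2) \<in> borel_measurable M" using assms(1) by simp
  show "AE x in M. norm ((Y x)\<^sup>2) \<le> norm (2 * b\<^sup>2 + 2 * (X x)\<^sup>2)"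
  proof (rule AE_I2)
    fix x assume "x \<in> space M"
    have "(Y x)\<^sup>2 \<le> 2 * b\<^sup>2 + 2 * (Y x - b)\<^sup>2"
      using zero_le_power2[of "Y x - 2 * b"] by (simp add: power2_eq_square algebra_simps)
    also have "\<dots> \<le> 2 * b\<^sup>2 + 2 * (X x)\<^sup>2"
      using dominated[OF \<open>x \<in> space M\<close>] by (simp add: abs_le_square_iff)
    finally show "norm ((Y x)\<^sup>2) \<le> norm (2 * b\<^sup>2 + 2 * (X x)\<^sup>2)" by simp
  qed
qed

theorem lemma3p2:
  fixes M :: "'a measure" and B :: "'a \<Rightarrow> int" and f :: "int \<Rightarrow> int"
    and c m :: real
  assumes "prob_space M"
    and "c > 0" and "m > 0"
    and "mono f"
    and "\<And>i j. i < j \<Longrightarrow> f j - f i \<le> j - i"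
    and "\<And>i j. real_of_int i + m \<le> real_of_int j \<Longrightarrow> real_of_int (f j - f i) \<ge> c * real_of_int (j - i)"
    and "B \<in> measurable M (count_space UNIV)"
    and "integrable M (\<lambda>x. (real_of_int (B x))\<^sup>2)"
    and "prob_space.variance M (\<lambda>x. real_of_int (B x)) > 0"
  shows "prob_space.variance M (\<lambda>x. real_of_int (f (B x)))
           \<ge> c\<^sup>2 * (1 - 2 * m / (c * sqrt (prob_space.variance M (\<lambda>x. real_of_int (B x)))))
               * prob_space.variance M (\<lambda>x. real_of_int (B x))"
proof -
  interpret prob_space M by fact
  define V where "V = variance (\<lambda>x. real_of_int (B x))"
  define s where "s = sqrt V"
  have "s > 0" and "s * s = V" using assms(9) unfolding s_def V_def by auto
  have measurable: "(\<lambda>x. g (B x)) \<in> borel_measurable M" for g :: "int \<Rightarrow> real"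
    by (rule measurable_compose[OF assms(7)]) simp
  have "\<bar>real_of_int (f (B x)) - f 0\<bar> \<le> \<bar>real_of_int (B x)\<bar>" for x
    using mono_slope_le_1_imp_abs_diff_le[OF assms(4,5), of "B x" 0] by linarith
  then have "integrable M (\<lambda>x. (real_of_int (f (B x)))\<^sup>2)"
    by (intro square_integrable_of_abs_diff_le[OF measurable assms(8)])
  moreover have "(real_of_int (f (B x)) - (real_of_int (f \<lfloor>\<mu>\<rfloor>) + c * (\<mu> - \<lfloor>\<mu>\<rfloor>))) * (B x - \<mu>)
         \<ge> c * (B x - \<mu>)\<^sup>2 - c * m * \<bar>B x - \<mu>\<bar>" for x and \<mu> :: real
    using coarse_growth_correlation_bound[of c m f, OF _ _ assms(4,6)] assms(2,3) by simp
  ultimately have "variance (\<lambda>x. real_of_int (f (B x))) \<ge> c\<^sup>2 * V - 2 * c\<^sup>2 * m * s"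
    unfolding s_def V_def
    using assms(2,3,8,9) measurable
    by (intro variance_ge_of_correlation_bound) auto
  moreover have "c\<^sup>2 * m * s \<le> c * m * s"
    using coarse_slope_le_1[OF assms(5,6)] assms(2,3) \<open>s > 0\<close> by (simp add: power2_eq_square)
  moreover have "c\<^sup>2 * (1 - 2 * m / (c * s)) * V = c\<^sup>2 * V - 2 * c * m * s"
    using \<open>s > 0\<close> \<open>s * s = V\<close> assms(2) by (simp add: field_simps power2_eq_square)
  ultimately show ?thesis unfolding s_def V_def by linarith
qed

end
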